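(* Let $C$ be a closed convex set in a finite-dimensional Euclidean space. Then: (i) (Transitivity) if $\hat F$ is a face of $F$ and $F$ is a face of $C$, where $F$ is an amenable face of $C$, then $\hat F$ is an amenable face of $F$ if and only if $\hat F$ is an amenable face of $C$; (ii) (Inheritance) if $C$ is amenable, then every face $F$ of $C$ is an amenable convex set; (iii) $C$ is amenable if and only if every maximal face $F$ of $C$ is both an amenable face of $C$ and an amenable convex set by itself.
   Context: A face of a closed convex set $C$ is a closed convex subset $F\subseteq C$ such that whenever $x,y\in C$ and $\alpha x+(1-\alpha)y\in F$ for some $\alpha\in(0,1)$, then $x,y\in F$. A face $F$ of $C$ is maximal if $F\ne C$ and there is no face $\hat F$ of $C$ with $\hat F\ne F$, $\hat F\ne C$ such that $F$ is a face of $\hat F$. A face $F$ of $C$ is amenable if for every bounded set $B$ there exists $\kappa>0$ such that $\operatorname{dist}(x,F)\le\kappa\operatorname{dist}(x,C)$ for all $x\in(\operatorname{aff}F)\cap B$; $C$ is amenable if all its faces are amenable. *)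

theory Defs
  imports "HOL-Analysis.Analysis"
begin

text \<open>The library notion face_of gives exactly the convex-subset-plus-extremality part.\<close>
definition is_face :: "'a::euclidean_space set \<Rightarrow> 'a set \<Rightarrow> bool" where
  "is_face F C \<longleftrightarrow> closed F \<and> F face_of C"

definition maximal_face :: "'a::euclidean_space set \<Rightarrow> 'a set \<Rightarrow> bool" where
  "maximal_face F C \<longleftrightarrow> is_face F C \<and> F \<noteq> C \<and>
     \<not> (\<exists>G. is_face G C \<and> G \<noteq> F \<and> G \<noteq> C \<and> is_face F G)"

definition amenable_face :: "'a::euclidean_space set \<Rightarrow> 'a set \<Rightarrow> bool" where
  "amenable_face F C \<longleftrightarrow> is_face F C \<and>
     (\<forall>B. bounded B \<longrightarrow> (\<exists>\<kappa>>0. \<forall>x \<in> affine hull F \<inter> B.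
         infdist x F \<le> \<kappa> * infdist x C))"

definition amenable :: "'a::euclidean_space set \<Rightarrow> bool" where
  "amenable C \<longleftrightarrow> (\<forall>F. is_face F C \<longrightarrow> amenable_face F C)"

end

theory Submission
  imports Defs
begin

text \<open>Amenability constants compose along a chain of faces: the error bound of G relative
  to F times that of F relative to C is one for G relative to C, since affine hull G lies in
  affine hull F. Conversely, G \<subseteq> F \<subseteq> C gives infdist x C \<le> infdist x F, so a bound relative
  to C is also one relative to F. Every proper face lies in a maximal one because aff_dim
  strictly increases along proper faces; with transitivity this reduces amenability of C
  to its maximal faces.\<close>

lemma is_face_imp_subset: "is_face F C \<Longrightarrow> F \<subseteq> C"
  by (simp add: is_face_def face_of_imp_subset)

lemma is_face_imp_convex: "is_face F C \<Longrightarrow> convex F"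
  by (auto simp: is_face_def dest: face_of_imp_convex)

lemma is_face_refl: "closed C \<Longrightarrow> convex C \<Longrightarrow> is_face C C"
  by (simp add: is_face_def face_of_refl)

lemma is_face_trans: "is_face G F \<Longrightarrow> is_face F C \<Longrightarrow> is_face G C"
  by (auto simp: is_face_def intro: face_of_trans)

lemma amenable_face_refl: "closed C \<Longrightarrow> convex C \<Longrightarrow> amenable_face C C"
  by (auto simp: amenable_face_def is_face_refl intro!: exI[of _ 1])

lemma amenable_face_trans:
  assumes FC: "amenable_face F C" and GF: "amenable_face G F"
  shows "amenable_face G C"
proof -
  have "\<exists>\<kappa>>0. \<forall>x \<in> affine hull G \<inter> B. infdist x G \<le> \<kappa> * infdist x C" if "bounded B" for B
  proof -
    obtain k1 where "k1 > 0" and k1: "\<forall>x \<in> affine hull F \<inter> B. infdist x F \<le> k1 * infdist x C"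
      using FC \<open>bounded B\<close> unfolding amenable_face_def by blast
    obtain k2 where "k2 > 0" and k2: "\<forall>x \<in> affine hull G \<inter> B. infdist x G \<le> k2 * infdist x F"
      using GF \<open>bounded B\<close> unfolding amenable_face_def by blast
    have hulls: "affine hull G \<subseteq> affine hull F"
      using GF by (intro hull_mono is_face_imp_subset) (simp add: amenable_face_def)
    have "infdist x G \<le> (k2 * k1) * infdist x C" if x: "x \<in> affine hull G \<inter> B" for x
    proof -
      have "infdist x G \<le> k2 * infdist x F"
        using k2 x by blast
      also have "\<dots> \<le> k2 * (k1 * infdist x C)"
        using k1 x hulls \<open>k2 > 0\<close> by (intro mult_left_mono) auto
      finally show ?thesis
        by (simp add: mult.assoc)
    qed
    then show ?thesis
      using \<open>k1 > 0\<close> \<open>k2 > 0\<close> by (intro exI[of _ "k2 * k1"]) auto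
  qed
  moreover have "is_face G C"
    using FC GF by (auto simp: amenable_face_def intro: is_face_trans)
  ultimately show ?thesis
    by (simp add: amenable_face_def)
qed

lemma amenable_face_of_face:
  assumes FC: "is_face F C" and GC: "amenable_face G C" and GF: "is_face G F"
  shows "amenable_face G F"
proof -
  have "\<exists>\<kappa>>0. \<forall>x \<in> affine hull G \<inter> B. infdist x G \<le> \<kappa> * infdist x F" if "bounded B" for B
  proof -
    obtain k where "k > 0" and k: "\<forall>x \<in> affine hull G \<inter> B. infdist x G \<le> k * infdist x C"
      using GC \<open>bounded B\<close> unfolding amenable_face_def by blast
    have "infdist x G \<le> k * infdist x F" if x: "x \<in> affine hull G \<inter> B" for x
    proof (cases "G = {}")
      case True
      then show ?thesis
        using \<open>k > 0\<close> infdist_nonneg[of x F] by (simp add: infdist_def)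
    next
      case False
      have "infdist x G \<le> k * infdist x C"
        using k x by blast
      also have "\<dots> \<le> k * infdist x F"
        using False is_face_imp_subset[OF GF] is_face_imp_subset[OF FC] \<open>k > 0\<close>
        by (intro mult_left_mono infdist_mono) auto
      finally show ?thesis .
    qed
    then show ?thesis
      using \<open>k > 0\<close> by blast
  qed
  then show ?thesis
    using GF by (simp add: amenable_face_def)
qed

lemma amenable_face_of_amenable_face_iff:
  assumes "amenable_face F C" and "is_face G F"
  shows "amenable_face G F \<longleftrightarrow> amenable_face G C"
proof
  show "amenable_face G F \<Longrightarrow> amenable_face G C"
    using assms(1) amenable_face_trans by blast
  show "amenable_face G C \<Longrightarrow> amenable_face G F"
    using assms amenable_face_of_face amenable_face_def by blast
qed

lemma amenable_face_imp_amenable: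
  assumes "amenable C" and "is_face F C"
  shows "amenable F"
  using assms unfolding amenable_def by (meson amenable_face_of_face is_face_trans)

lemma maximal_face_exists:
  fixes C :: "'a::euclidean_space set"
  assumes "is_face G C" and "G \<noteq> C"
  shows "\<exists>F. maximal_face F C \<and> is_face G F"
  using assms
proof (induction "nat (int DIM('a) - aff_dim G)" arbitrary: G rule: less_induct)
  case less
  show ?case
  proof (cases "maximal_face G C")
    case True
    have "closed G" "convex G"
      using less.prems is_face_imp_convex by (auto simp: is_face_def)
    then show ?thesis
      using True is_face_refl by blast
  next
    case False
    then obtain H where H: "is_face H C" "H \<noteq> G" "H \<noteq> C" "is_face G H"
      using less.prems unfolding maximal_face_def by blast
    have "aff_dim G < aff_dim H"
      using H is_face_imp_convex face_of_aff_dim_lt by (auto simp: is_face_def)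
    then have "nat (int DIM('a) - aff_dim H) < nat (int DIM('a) - aff_dim G)"
      using aff_dim_le_DIM[of H] by linarith
    then obtain F where "maximal_face F C" "is_face H F"
      using less.hyps H by blast
    then show ?thesis
      using H is_face_trans by blast
  qed
qed

lemma amenable_iff_maximal_faces:
  assumes "closed C" and "convex C"
  shows "amenable C \<longleftrightarrow> (\<forall>F. maximal_face F C \<longrightarrow> amenable_face F C \<and> amenable F)"
proof
  assume "amenable C"
  then show "\<forall>F. maximal_face F C \<longrightarrow> amenable_face F C \<and> amenable F"
    using amenable_face_imp_amenable unfolding maximal_face_def amenable_def by blast
next
  assume maximal: "\<forall>F. maximal_face F C \<longrightarrow> amenable_face F C \<and> amenable F"
  have "amenable_face G C" if "is_face G C" for G
  proof (cases "G = C")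
    case True
    then show ?thesis
      using amenable_face_refl assms by blast
  next
    case False
    then obtain F where "maximal_face F C" "is_face G F"
      using maximal_face_exists \<open>is_face G C\<close> by blast
    then have "amenable_face F C" "amenable_face G F"
      using maximal by (auto simp: amenable_def)
    then show ?thesis
      by (rule amenable_face_trans)
  qed
  then show "amenable C"
    by (simp add: amenable_def)
qed

theorem proposition3p6:
  fixes C :: "'a::euclidean_space set"
  assumes "closed C" and "convex C"
  shows "(\<forall>F G. is_face F C \<and> amenable_face F C \<and> is_face G F \<longrightarrow>
            (amenable_face G F \<longleftrightarrow> amenable_face G C))
       \<and> (amenable C \<longrightarrow> (\<forall>F. is_face F C \<longrightarrow> amenable F))
       \<and> (amenable C \<longleftrightarrow> (\<forall>F. maximal_face F C \<longrightarrow> amenable_face F C \<and> amenable F))"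
  using amenable_face_of_amenable_face_iff amenable_face_imp_amenable
    amenable_iff_maximal_faces[OF assms] by blast

end
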